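(* For fixed $h\in\mathcal H_3$ and $y\in\mathbb Z_+^r$, the function $f_h(\cdot,y):\mathbb R^d\to\mathbb R$ is of class $C^3$ and satisfies $|f_h(\cdot,y)|_{\rm Lip}\le1$, $|f_h(\cdot,y)|_2\le\frac12$, $|f_h(\cdot,y)|_3\le\frac13$. If moreover $h(\cdot,y')$ is constant on $\mathbb R^d$ for every $y'\in\mathbb Z_+^r$, then $|f_h(\cdot,y)|_{\rm Lip}=|f_h(\cdot,y)|_2=|f_h(\cdot,y)|_3=0$.
   Context: Fix positive semidefinite $\Sigma\in\mathbb R^{d\times d}$ and $\lambda\in(0,\infty)^r$; $Z\sim\mathcal N_d(0,\Sigma)$, $N\sim\prod_j\mathrm{Po}(\lambda_j)$ independent. For $g\in C^3_b(\mathbb R^d)$: $|g|_k=\max_{j_1\le\dots\le j_k}\sup|\partial_{j_1\cdots j_k}g|$, $|g|_{\rm Lip}$ the Lipschitz constant. $\mathcal C_3=\{g:|g|_{\rm Lip}\vee|g|_2\vee|g|_3\le1\}$, $\mathcal H_3=\{h:\mathbb R^d\times\mathbb Z_+^r\to\mathbb R:\sup|h|\le1,\ h(\cdot,y)\in\mathcal C_3\ \forall y\}$. $S_sh(x,y)=\mathbb Eh(\sqrt{1-s}x+\sqrt sZ,y)$, $p_s(y,z)=\prod_j\sum_{k=0}^{y_j\wedge z_j}\binom{y_j}k(1-s)^ks^{y_j-k}(\lambda_js)^{z_j-k}e^{-\lambda_js}/(z_j-k)!$, $T_sh(x,y)=\sum_zS_sh(x,z)p_s(y,z)$, $f_h(x,y)=-\int_0^1\frac{1}{2(1-s)}[T_sh(x,y)-\mathbb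 Eh(Z,N)]ds$. *)

theory Defs
  imports "HOL-Probability.Probability"
begin

definition pd :: "'n::finite \<Rightarrow> (real^'n \<Rightarrow> real) \<Rightarrow> real^'n \<Rightarrow> real" where
  "pd j g x = deriv (\<lambda>t. g (x + t *\<^sub>R axis j 1)) 0"

definition has_pd :: "'n::finite \<Rightarrow> (real^'n \<Rightarrow> real) \<Rightarrow> bool" where
  "has_pd j g \<longleftrightarrow> (\<forall>x. (\<lambda>t. g (x + t *\<^sub>R axis j 1)) differentiable (at 0))"

definition C3 :: "(real^'n::finite \<Rightarrow> real) \<Rightarrow> bool" where
  "C3 g \<longleftrightarrow> continuous_on UNIV g
     \<and> (\<forall>j. has_pd j g \<and> continuous_on UNIV (pd j g))
     \<and> (\<forall>j k. has_pd k (pd j g) \<and> continuous_on UNIV (pd k (pd j g)))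
     \<and> (\<forall>j k l. has_pd l (pd k (pd j g)) \<and> continuous_on UNIV (pd l (pd k (pd j g))))"

definition snorm2 :: "(real^'n::finite \<Rightarrow> real) \<Rightarrow> ereal" where
  "snorm2 g = (SUP (x, j, k) \<in> UNIV. ereal \<bar>pd k (pd j g) x\<bar>)"

definition snorm3 :: "(real^'n::finite \<Rightarrow> real) \<Rightarrow> ereal" where
  "snorm3 g = (SUP (x, j, k, l) \<in> UNIV. ereal \<bar>pd l (pd k (pd j g)) x\<bar>)"

definition lip_const :: "(real^'n::finite \<Rightarrow> real) \<Rightarrow> ereal" where
  "lip_const g = (SUP (x, y) \<in> {(x, y). x \<noteq> y}. ereal (\<bar>g x - g y\<bar> / dist x y))"

definition cls_C3 :: "(real^'n::finite \<Rightarrow> real) \<Rightarrow> bool" where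
  "cls_C3 g \<longleftrightarrow> C3 g \<and> bounded (range g) \<and>
     lip_const g \<le> 1 \<and> snorm2 g \<le> 1 \<and> snorm3 g \<le> 1"

definition cls_H3 :: "(real^'n::finite \<Rightarrow> ('m::finite \<Rightarrow> nat) \<Rightarrow> real) \<Rightarrow> bool" where
  "cls_H3 h \<longleftrightarrow> (\<forall>x y. \<bar>h x y\<bar> \<le> 1) \<and> (\<forall>y. cls_C3 (\<lambda>x. h x y))"

definition psd :: "real^'n^'n \<Rightarrow> bool" where
  "psd S \<longleftrightarrow> transpose S = S \<and> (\<forall>v. 0 \<le> v \<bullet> (S *v v))"

text \<open>Standard Gaussian measure on R^d, and N_d(0,Sigma) as the law of A W with A A^T = Sigma.\<close>
definition std_gauss :: "(real^'n::finite) measure" where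
  "std_gauss = density lborel (\<lambda>w. ennreal (\<Prod>i\<in>UNIV. std_normal_density (w $ i)))"

definition sqrt_mat :: "real^'n^'n \<Rightarrow> real^'n^'n" where
  "sqrt_mat S = (SOME A. A ** transpose A = S)"

definition gauss :: "real^'n::finite^'n \<Rightarrow> (real^'n) measure" where
  "gauss S = distr std_gauss borel (\<lambda>w. sqrt_mat S *v w)"

definition poisson_prod :: "('m::finite \<Rightarrow> real) \<Rightarrow> ('m \<Rightarrow> nat) \<Rightarrow> real" where
  "poisson_prod lam z = (\<Prod>j\<in>UNIV. exp (- lam j) * lam j ^ z j / fact (z j))"

definition Eh :: "real^'n::finite^'n \<Rightarrow> ('m::finite \<Rightarrow> real) \<Rightarrow>
    (real^'n \<Rightarrow> ('m \<Rightarrow> nat) \<Rightarrow> real) \<Rightarrow> real" where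
  "Eh S lam h = (\<Sum>\<^sub>\<infinity> z. poisson_prod lam z * (\<integral> u. h u z \<partial>gauss S))"

definition S_op :: "real^'n::finite^'n \<Rightarrow> real \<Rightarrow>
    (real^'n \<Rightarrow> ('m \<Rightarrow> nat) \<Rightarrow> real) \<Rightarrow> real^'n \<Rightarrow> ('m \<Rightarrow> nat) \<Rightarrow> real" where
  "S_op S s h x y = (\<integral> u. h (sqrt (1 - s) *\<^sub>R x + sqrt s *\<^sub>R u) y \<partial>gauss S)"

definition p_s :: "('m::finite \<Rightarrow> real) \<Rightarrow> real \<Rightarrow> ('m \<Rightarrow> nat) \<Rightarrow> ('m \<Rightarrow> nat) \<Rightarrow> real" where
  "p_s lam s y z = (\<Prod>j\<in>UNIV. \<Sum>k = 0..min (y j) (z j).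
      real (y j choose k) * (1 - s) ^ k * s ^ (y j - k) * (lam j * s) ^ (z j - k)
      * exp (- lam j * s) / fact (z j - k))"

definition T_op :: "real^'n::finite^'n \<Rightarrow> ('m::finite \<Rightarrow> real) \<Rightarrow> real \<Rightarrow>
    (real^'n \<Rightarrow> ('m \<Rightarrow> nat) \<Rightarrow> real) \<Rightarrow> real^'n \<Rightarrow> ('m \<Rightarrow> nat) \<Rightarrow> real" where
  "T_op S lam s h x y = (\<Sum>\<^sub>\<infinity> z. S_op S s h x z * p_s lam s y z)"

definition f_sol :: "real^'n::finite^'n \<Rightarrow> ('m::finite \<Rightarrow> real) \<Rightarrow>
    (real^'n \<Rightarrow> ('m \<Rightarrow> nat) \<Rightarrow> real) \<Rightarrow> real^'n \<Rightarrow> ('m \<Rightarrow> nat) \<Rightarrow> real" where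
  "f_sol S lam h x y = - (LBINT s:{0..1}. 1 / (2 * (1 - s)) * (T_op S lam s h x y - Eh S lam h))"

end

theory Submission
  imports Defs
begin

text \<open>Put \<open>a = sqrt (1 - s)\<close>. The Gaussian average \<open>S\<^sub>s h(x, z)\<close> sees \<open>x\<close> only
  through \<open>a x\<close>, and the Poisson kernel \<open>p\<^sub>s(y, -)\<close> is a probability distribution
  independent of \<open>x\<close>; differentiating under both integrals gives
  \<open>\<partial>\<^sub>j T\<^sub>s h = a T\<^sub>s (\<partial>\<^sub>j h)\<close>, and \<open>T\<^sub>s\<close> does not increase sup norms or
  Lipschitz constants. Differentiating \<open>f\<^sub>h\<close> k times under the time integral
  therefore gives \<open>- \<integral>\<^sub>0\<^sup>1 a\<^sup>k / (2 (1 - s)) T\<^sub>s (\<partial>\<^sup>k h) ds\<close>, which is bounded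
  by \<open>\<integral>\<^sub>0\<^sup>1 a\<^sup>k / (2 (1 - s)) ds = 1 / k\<close>; for k = 1 the same estimate applied to
  differences \<open>h(x, -) - h(x', -)\<close> gives the Lipschitz bound. If every \<open>h(-, y')\<close>
  is constant, so is \<open>f\<^sub>h\<close>.\<close>

section \<open>Differentiation and continuity under the integral sign\<close>

lemma integrable_lipschitz_in_parameter:
  fixes F :: "'a \<Rightarrow> real \<Rightarrow> real"
  assumes "integrable M (\<lambda>\<omega>. F \<omega> a)" and "integrable M B"
    and "(\<lambda>\<omega>. F \<omega> b) \<in> borel_measurable M"
    and lip: "\<And>\<omega>. \<omega> \<in> space M \<Longrightarrow> \<bar>F \<omega> b - F \<omega> a\<bar> \<le> B \<omega> * \<bar>b - a\<bar>"
  shows "integrable M (\<lambda>\<omega>. F \<omega> b)"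
proof (rule Bochner_Integration.integrable_bound[of _ "\<lambda>\<omega>. \<bar>F \<omega> a\<bar> + B \<omega> * \<bar>b - a\<bar>"])
  show "integrable M (\<lambda>\<omega>. \<bar>F \<omega> a\<bar> + B \<omega> * \<bar>b - a\<bar>)"
    using assms(1,2) by (intro Bochner_Integration.integrable_add integrable_abs integrable_mult_left)
  show "AE \<omega> in M. norm (F \<omega> b) \<le> norm (\<bar>F \<omega> a\<bar> + B \<omega> * \<bar>b - a\<bar>)"
    using lip by (intro AE_I2) (fastforce intro: order_trans[OF _ abs_ge_self])
qed (rule assms(3))

lemma has_real_derivative_integral:
  fixes F F' :: "'a \<Rightarrow> real \<Rightarrow> real" and B :: "'a \<Rightarrow> real"
  assumes D: "\<And>\<omega> t. \<omega> \<in> space M \<Longrightarrow> (F \<omega> has_real_derivative F' \<omega> t) (at t)"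
    and bound: "\<And>\<omega> t. \<omega> \<in> space M \<Longrightarrow> \<bar>F' \<omega> t\<bar> \<le> B \<omega>"
    and iB: "integrable M B"
    and mF: "\<And>t. (\<lambda>\<omega>. F \<omega> t) \<in> borel_measurable M"
    and mF': "(\<lambda>\<omega>. F' \<omega> t0) \<in> borel_measurable M"
    and iF: "integrable M (\<lambda>\<omega>. F \<omega> t0)"
  shows "((\<lambda>t. \<integral>\<omega>. F \<omega> t \<partial>M) has_real_derivative (\<integral>\<omega>. F' \<omega> t0 \<partial>M)) (at t0)"
proof -
  have lip: "\<bar>F \<omega> b - F \<omega> a\<bar> \<le> B \<omega> * \<bar>b - a\<bar>" if "\<omega> \<in> space M" for \<omega> a b
    using field_differentiable_bound[of UNIV "F \<omega>" "F' \<omega>" "B \<omega>" b a] D bound that by auto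
  have int: "integrable M (\<lambda>\<omega>. F \<omega> t)" for t
    using integrable_lipschitz_in_parameter[where a=t0 and b=t, OF iF iB mF lip] by blast
  show ?thesis
    unfolding DERIV_def
  proof (subst tendsto_at_iff_sequentially, intro allI impI)
    fix X :: "nat \<Rightarrow> real" assume X: "\<forall>i. X i \<in> UNIV - {0}" and X0: "X \<longlonglongrightarrow> 0"
    have eq: "((\<lambda>h. ((\<integral>\<omega>. F \<omega> (t0 + h) \<partial>M) - (\<integral>\<omega>. F \<omega> t0 \<partial>M)) / h) \<circ> X) i
        = (\<integral>\<omega>. (F \<omega> (t0 + X i) - F \<omega> t0) / X i \<partial>M)" for i
      using int by (simp add: Bochner_Integration.integral_diff)
    show "((\<lambda>h. ((\<integral>\<omega>. F \<omega> (t0 + h) \<partial>M) - (\<integral>\<omega>. F \<omega> t0 \<partial>M)) / h) \<circ> X)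
        \<longlonglongrightarrow> (\<integral>\<omega>. F' \<omega> t0 \<partial>M)"
      unfolding eq
    proof (rule integral_dominated_convergence[where w=B])
      show "AE \<omega> in M. (\<lambda>i. (F \<omega> (t0 + X i) - F \<omega> t0) / X i) \<longlonglongrightarrow> F' \<omega> t0"
      proof (rule AE_I2)
        fix \<omega> assume \<omega>: "\<omega> \<in> space M"
        have "((\<lambda>h. (F \<omega> (t0 + h) - F \<omega> t0) / h) \<longlongrightarrow> F' \<omega> t0) (at 0)"
          using D[OF \<omega>, of t0] unfolding DERIV_def .
        then have "((\<lambda>h. (F \<omega> (t0 + h) - F \<omega> t0) / h) \<circ> X) \<longlonglongrightarrow> F' \<omega> t0"
          using X X0 by (subst (asm) tendsto_at_iff_sequentially) blast
        then show "(\<lambda>i. (F \<omega> (t0 + X i) - F \<omega> t0) / X i) \<longlonglongrightarrow> F' \<omega> t0"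
          by (simp add: o_def)
      qed
      show "AE \<omega> in M. norm ((F \<omega> (t0 + X i) - F \<omega> t0) / X i) \<le> B \<omega>" for i
      proof (rule AE_I2)
        fix \<omega> assume \<omega>: "\<omega> \<in> space M"
        have "X i \<noteq> 0" using X by auto
        then show "norm ((F \<omega> (t0 + X i) - F \<omega> t0) / X i) \<le> B \<omega>"
          using lip[OF \<omega>, of "t0 + X i" t0] by (simp add: divide_le_eq)
      qed
    qed (use mF mF' iB in auto)
  qed
qed

lemma has_real_derivative_along_line:
  fixes \<phi> :: "'a::real_normed_vector \<Rightarrow> real"
  assumes "\<And>x. ((\<lambda>t. \<phi> (x + t *\<^sub>R v)) has_real_derivative \<psi> x) (at 0)"
  shows "((\<lambda>t. \<phi> (x + t *\<^sub>R v)) has_real_derivative \<psi> (x + t0 *\<^sub>R v)) (at t0)"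
proof -
  have "((\<lambda>t. \<phi> ((x + t0 *\<^sub>R v) + t *\<^sub>R v)) has_real_derivative \<psi> (x + t0 *\<^sub>R v)) (at 0)"
    by (rule assms)
  moreover have "(\<lambda>t. \<phi> ((x + t0 *\<^sub>R v) + t *\<^sub>R v)) = (\<lambda>t. (\<lambda>t. \<phi> (x + t *\<^sub>R v)) (t + t0))"
    by (auto simp: algebra_simps)
  ultimately show ?thesis
    using DERIV_shift[of "\<lambda>t. \<phi> (x + t *\<^sub>R v)" "\<psi> (x + t0 *\<^sub>R v)" 0 t0] by simp
qed

lemma has_real_derivative_integral_along_line:
  fixes F F' :: "'a \<Rightarrow> 'b::real_normed_vector \<Rightarrow> real" and B :: "'a \<Rightarrow> real"
  assumes D: "\<And>\<omega> x. \<omega> \<in> space M \<Longrightarrow> ((\<lambda>t. F \<omega> (x + t *\<^sub>R v)) has_real_derivative F' \<omega> x) (at 0)"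
    and "\<And>\<omega> x. \<omega> \<in> space M \<Longrightarrow> \<bar>F' \<omega> x\<bar> \<le> B \<omega>"
    and "integrable M B"
    and "\<And>x. (\<lambda>\<omega>. F \<omega> x) \<in> borel_measurable M"
    and "\<And>x. (\<lambda>\<omega>. F' \<omega> x) \<in> borel_measurable M"
    and "integrable M (\<lambda>\<omega>. F \<omega> x)"
  shows "((\<lambda>t. \<integral>\<omega>. F \<omega> (x + t *\<^sub>R v) \<partial>M) has_real_derivative (\<integral>\<omega>. F' \<omega> x \<partial>M)) (at 0)"
proof -
  have "((\<lambda>t. \<integral>\<omega>. F \<omega> (x + t *\<^sub>R v) \<partial>M) has_real_derivative (\<integral>\<omega>. F' \<omega> (x + 0 *\<^sub>R v) \<partial>M)) (at 0)"
  proof (rule has_real_derivative_integral[where B=B])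
    show "((\<lambda>t. F \<omega> (x + t *\<^sub>R v)) has_real_derivative F' \<omega> (x + t *\<^sub>R v)) (at t)"
      if "\<omega> \<in> space M" for \<omega> t
      by (rule has_real_derivative_along_line[where \<phi>="F \<omega>"], rule D[OF that])
  qed (use assms(2-) in auto)
  then show ?thesis by simp
qed

lemma continuous_on_parametric_integral:
  fixes F :: "'a \<Rightarrow> 'b::metric_space \<Rightarrow> real" and B :: "'a \<Rightarrow> real"
  assumes C: "\<And>\<omega>. \<omega> \<in> space M \<Longrightarrow> continuous_on UNIV (F \<omega>)"
    and mF: "\<And>x. (\<lambda>\<omega>. F \<omega> x) \<in> borel_measurable M"
    and iB: "integrable M B"
    and bound: "\<And>\<omega> x. \<omega> \<in> space M \<Longrightarrow> \<bar>F \<omega> x\<bar> \<le> B \<omega>"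
  shows "continuous_on UNIV (\<lambda>x. \<integral>\<omega>. F \<omega> x \<partial>M)"
proof (rule continuous_on_sequentiallyI)
  fix u :: "nat \<Rightarrow> 'b" and a assume u: "u \<longlonglongrightarrow> a"
  show "(\<lambda>n. \<integral>\<omega>. F \<omega> (u n) \<partial>M) \<longlonglongrightarrow> (\<integral>\<omega>. F \<omega> a \<partial>M)"
  proof (rule integral_dominated_convergence[where w=B])
    show "AE \<omega> in M. (\<lambda>i. F \<omega> (u i)) \<longlonglongrightarrow> F \<omega> a"
      using C u by (intro AE_I2) (auto simp: continuous_on_sequentially o_def)
  qed (use mF iB bound in auto)
qed

lemma set_integral_dominated:
  fixes f w :: "'a \<Rightarrow> real"
  assumes meas: "set_borel_measurable M A f" and w: "set_integrable M A w"
    and bound: "\<And>x. x \<in> A \<Longrightarrow> \<bar>f x\<bar> \<le> w x"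
  shows "set_integrable M A f" and "\<bar>LINT x:A|M. f x\<bar> \<le> (LINT x:A|M. w x)"
proof -
  show int: "set_integrable M A f"
    by (rule set_integrable_bound[OF w meas]) (use bound in \<open>force intro!: AE_I2\<close>)
  have "\<bar>LINT x:A|M. f x\<bar> \<le> (LINT x:A|M. \<bar>f x\<bar>)"
    unfolding set_lebesgue_integral_def
    using integral_abs_bound[of M "\<lambda>x. indicator A x *\<^sub>R f x"] by (simp add: abs_mult)
  also have "\<dots> \<le> (LINT x:A|M. w x)"
    by (rule set_integral_mono[OF set_integrable_abs[OF int] w bound])
  finally show "\<bar>LINT x:A|M. f x\<bar> \<le> (LINT x:A|M. w x)" .
qed

lemma set_integral_Icc_01_FTC_nonneg:
  fixes f F :: "real \<Rightarrow> real"
  assumes "\<And>x. 0 < x \<Longrightarrow> x < 1 \<Longrightarrow> (F has_real_derivative f x) (at x)"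
    and "\<And>x. 0 < x \<Longrightarrow> x < 1 \<Longrightarrow> isCont f x"
    and "\<And>x. 0 < x \<Longrightarrow> x < 1 \<Longrightarrow> 0 \<le> f x"
    and "(F \<longlongrightarrow> A) (at_right 0)" and "(F \<longlongrightarrow> B) (at_left 1)"
  shows "set_integrable lborel {0..1} f" and "(LBINT s:{0..1}. f s) = B - A"
proof -
  have "set_integrable lborel (einterval (ereal 0) (ereal 1)) f
      \<and> (LBINT x=ereal 0..ereal 1. f x) = B - A"
    by (intro conjI interval_integral_FTC_nonneg[where F=F])
       (use assms in \<open>auto simp: ereal_tendsto_simps1 intro!: AE_I2\<close>)
  then have i: "set_integrable lborel {0<..<1} f" and v: "(LBINT s:{0<..<1}. f s) = B - A"
    by (auto simp: interval_lebesgue_integral_def)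
  have eq: "indicator {0<..<1} s *\<^sub>R f s = indicator {0..1} s *\<^sub>R f s"
    if "s \<in> space lborel" "s \<notin> {0, 1}" for s :: real
    using that by (auto simp: indicator_def)
  show "set_integrable lborel {0..1} f"
    using i unfolding set_integrable_def
    by (subst integrable_discrete_difference[where X="{0,1}", OF _ _ _ eq, symmetric]) auto
  show "(LBINT s:{0..1}. f s) = B - A"
    using v unfolding set_lebesgue_integral_def
    by (subst integral_discrete_difference[where X="{0,1}", OF _ _ _ eq, symmetric]) auto
qed

lemma weight_integral:
  assumes k: "0 < k"
  shows "set_integrable lborel {0..1} (\<lambda>s. sqrt (1 - s) ^ k / (2 * (1 - s)))"
    and "(LBINT s:{0..1}. sqrt (1 - s) ^ k / (2 * (1 - s))) = 1 / k"
proof -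
  obtain m where m: "k = Suc m" using k by (cases k) auto
  have D: "((\<lambda>s. - (sqrt (1 - s) ^ k) / k) has_real_derivative sqrt (1 - x) ^ k / (2 * (1 - x))) (at x)"
    if x: "0 < x" "x < 1" for x
  proof -
    define r where "r = sqrt (1 - x)"
    have r: "0 < r" "1 - x = r * r" using x by (simp_all add: r_def)
    have "((\<lambda>s. - (sqrt (1 - s) ^ k) / k) has_real_derivative
        - (real k * r ^ (k - 1) * (inverse r / 2 * (0 - 1))) / k) (at x)"
      unfolding r_def using x by (auto intro!: derivative_eq_intros)
    moreover have "- (real k * r ^ (k - 1) * (inverse r / 2 * (0 - 1))) / k = r ^ k / (2 * (r * r))"
      using r(1) unfolding m by (simp add: field_simps del: of_nat_Suc)
    ultimately show ?thesis by (metis r(2) r_def)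
  qed
  have lim0: "((\<lambda>s. - (sqrt (1 - s) ^ k) / k) \<longlongrightarrow> - 1 / k) (at_right 0)"
    by (rule tendsto_eq_intros refl | use k in simp)+
  have lim1: "((\<lambda>s. - (sqrt (1 - s) ^ k) / k) \<longlongrightarrow> 0) (at_left 1)"
    by (rule tendsto_eq_intros refl | use k in simp)+
  note FTC = set_integral_Icc_01_FTC_nonneg[OF D _ _ lim0 lim1]
  show "set_integrable lborel {0..1} (\<lambda>s. sqrt (1 - s) ^ k / (2 * (1 - s)))"
    by (rule FTC(1)) (auto intro!: continuous_intros)
  show "(LBINT s:{0..1}. sqrt (1 - s) ^ k / (2 * (1 - s))) = 1 / k"
    by (subst FTC(2)) (auto intro!: continuous_intros)
qed

section \<open>Partial derivatives and the seminorms\<close>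

lemma pd_has_real_derivative:
  assumes "has_pd j g"
  shows "((\<lambda>t. g (x + t *\<^sub>R axis j 1)) has_real_derivative pd j g (x + t0 *\<^sub>R axis j 1)) (at t0)"
  by (rule has_real_derivative_along_line)
     (use assms in \<open>simp add: has_pd_def pd_def DERIV_deriv_iff_real_differentiable\<close>)

lemma pd_has_real_derivative_scaled:
  assumes "has_pd j g"
  shows "((\<lambda>t. g (w + (a * t) *\<^sub>R axis j 1)) has_real_derivative
      a * pd j g (w + (a * t0) *\<^sub>R axis j 1)) (at t0)"
  using DERIV_chain2[OF pd_has_real_derivative[OF assms] DERIV_cmult_Id[of a t0]]
  by (simp add: mult.commute)

lemma has_pdI:
  assumes "\<And>x. ((\<lambda>t. g (x + t *\<^sub>R axis j 1)) has_real_derivative G x) (at 0)"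
  shows "has_pd j g" and "pd j g = G"
  using assms unfolding has_pd_def pd_def
  by (auto simp: real_differentiable_def DERIV_imp_deriv intro!: ext)

lemma abs_pd_le_lipschitz:
  assumes "has_pd j g" and L: "\<And>x x'. \<bar>g x - g x'\<bar> \<le> L * dist x x'"
  shows "\<bar>pd j g x\<bar> \<le> L"
proof -
  let ?q = "\<lambda>h. (g (x + (0 + h) *\<^sub>R axis j 1) - g (x + 0 *\<^sub>R axis j 1)) / h"
  have "(?q \<longlongrightarrow> pd j g x) (at 0)"
    using pd_has_real_derivative[OF assms(1), of x 0] unfolding DERIV_def by simp
  then have "((\<lambda>h. \<bar>?q h\<bar>) \<longlongrightarrow> \<bar>pd j g x\<bar>) (at 0)"
    by (rule tendsto_rabs)
  moreover have "\<bar>?q h\<bar> \<le> L" if "h \<noteq> 0" for h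
  proof -
    have "\<bar>g (x + h *\<^sub>R axis j 1) - g x\<bar> \<le> L * \<bar>h\<bar>"
      using L[of "x + h *\<^sub>R axis j 1" x] by (simp add: dist_norm)
    then show ?thesis using that by (simp add: abs_divide divide_le_eq)
  qed
  then have "eventually (\<lambda>h. \<bar>?q h\<bar> \<le> L) (at 0)"
    by (auto simp: eventually_at_filter)
  ultimately show ?thesis by (rule tendsto_upperbound) simp
qed

lemma lip_const_le_iff:
  "lip_const g \<le> ereal L \<longleftrightarrow> (\<forall>x x'. \<bar>g x - g x'\<bar> \<le> L * dist x x')"
proof -
  have ratio: "\<bar>g x - g x'\<bar> / dist x x' \<le> L \<longleftrightarrow> \<bar>g x - g x'\<bar> \<le> L * dist x x'"
    if "x \<noteq> x'" for x x'
    using that by (simp add: divide_le_eq)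
  have "lip_const g \<le> ereal L \<longleftrightarrow> (\<forall>x x'. x \<noteq> x' \<longrightarrow> \<bar>g x - g x'\<bar> \<le> L * dist x x')"
    unfolding lip_const_def SUP_le_iff using ratio by auto
  also have "\<dots> \<longleftrightarrow> (\<forall>x x'. \<bar>g x - g x'\<bar> \<le> L * dist x x')"
    by (metis diff_self abs_zero dist_self mult_zero_right order_refl)
  finally show ?thesis .
qed

lemma snorm2_le_iff: "snorm2 g \<le> ereal c \<longleftrightarrow> (\<forall>x j k. \<bar>pd k (pd j g) x\<bar> \<le> c)"
  unfolding snorm2_def by (auto simp: SUP_le_iff)

lemma snorm3_le_iff: "snorm3 g \<le> ereal c \<longleftrightarrow> (\<forall>x j k l. \<bar>pd l (pd k (pd j g)) x\<bar> \<le> c)"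
  unfolding snorm3_def by (auto simp: SUP_le_iff)

lemma one_div_numeral_ereal: "(1 / numeral n :: ereal) = ereal (1 / numeral n)"
  by (simp add: one_ereal_def divide_ereal_def)

lemma constant_fun_C3_seminorms:
  fixes c :: real
  shows "C3 (\<lambda>x::real^'n::finite. c)" and "lip_const (\<lambda>x::real^'n. c) = 0"
    and "snorm2 (\<lambda>x::real^'n. c) = 0" and "snorm3 (\<lambda>x::real^'n. c) = 0"
proof -
  have pd_const: "has_pd j (\<lambda>x::real^'n. d) \<and> pd j (\<lambda>x::real^'n. d) = (\<lambda>x. 0)" for j d
    using has_pdI[of "\<lambda>x::real^'n. d" j "\<lambda>x. 0"] by simp
  show "C3 (\<lambda>x::real^'n. c)" unfolding C3_def using pd_const by simp
  show "snorm2 (\<lambda>x::real^'n. c) = 0" unfolding snorm2_def using pd_const by simp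
  show "snorm3 (\<lambda>x::real^'n. c) = 0" unfolding snorm3_def using pd_const by simp
  obtain i :: 'n where True by blast
  have "{(x, y). x \<noteq> y} \<noteq> ({} :: ((real^'n) \<times> (real^'n)) set)"
    using axis_eq_0_iff[of i "1::real"] by auto
  then show "lip_const (\<lambda>x::real^'n. c) = 0" unfolding lip_const_def by simp
qed

section \<open>The Poisson transition kernel\<close>

text \<open>The probability mass function of \<open>Bin(m, 1 - s) + Po(l s)\<close>, written as a
  convolution; this is why it sums to one.\<close>
definition p_s_factor :: "real \<Rightarrow> real \<Rightarrow> nat \<Rightarrow> nat \<Rightarrow> real" where
  "p_s_factor l s m n = (\<Sum>k = 0..min m n. real (m choose k) * (1 - s) ^ k * s ^ (m - k)
      * (l * s) ^ (n - k) * exp (- l * s) / fact (n - k))"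

lemma p_s_eq_prod: "p_s lam s y z = (\<Prod>j\<in>UNIV. p_s_factor (lam j) s (y j) (z j))"
  by (simp add: p_s_def p_s_factor_def)

lemma p_s_factor_nonneg: "0 \<le> l \<Longrightarrow> 0 \<le> s \<Longrightarrow> s \<le> 1 \<Longrightarrow> 0 \<le> p_s_factor l s m n"
  unfolding p_s_factor_def by (auto intro!: sum_nonneg divide_nonneg_nonneg mult_nonneg_nonneg)

lemma p_s_factor_sums:
  assumes l: "0 \<le> l" and s: "0 \<le> s" "s \<le> 1"
  shows "p_s_factor l s m sums 1"
proof -
  define a where "a k = real (m choose k) * (1 - s) ^ k * s ^ (m - k)" for k
  define b where "b n = (l * s) ^ n * exp (- l * s) / fact n" for n
  have "a sums (\<Sum>k\<le>m. a k)"
    by (rule sums_finite) (auto simp: a_def)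
  also have "(\<Sum>k\<le>m. a k) = ((1 - s) + s) ^ m"
    unfolding binomial_ring a_def by simp
  finally have a_sums: "a sums 1" by simp
  have "(\<lambda>n. ((l * s) ^ n /\<^sub>R fact n) * exp (- l * s)) sums (exp (l * s) * exp (- l * s))"
    by (rule sums_mult2[OF exp_converges])
  moreover have "(\<lambda>n. ((l * s) ^ n /\<^sub>R fact n) * exp (- l * s)) = b"
    by (simp add: b_def fun_eq_iff field_simps)
  ultimately have b_sums: "b sums 1" by (simp add: exp_minus)
  have "(\<lambda>n. \<Sum>i\<le>n. a i * b (n - i)) sums ((\<Sum>k. a k) * (\<Sum>k. b k))"
  proof (rule Cauchy_product_sums)
    have "\<bar>a k\<bar> = a k" "\<bar>b k\<bar> = b k" for k
      using s l by (simp_all add: a_def b_def)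
    then show "summable (\<lambda>k. norm (a k))" "summable (\<lambda>k. norm (b k))"
      using a_sums b_sums by (simp_all add: sums_summable)
  qed
  then have Cauchy: "(\<lambda>n. \<Sum>i\<le>n. a i * b (n - i)) sums 1"
    using a_sums b_sums by (simp add: sums_unique[symmetric])
  have "p_s_factor l s m n = (\<Sum>i\<le>n. a i * b (n - i))" for n
  proof -
    have "p_s_factor l s m n = (\<Sum>k\<in>{0..min m n}. a k * b (n - k))"
      unfolding p_s_factor_def a_def b_def by (intro sum.cong refl) (simp add: field_simps)
    also have "\<dots> = (\<Sum>i\<le>n. a i * b (n - i))"
      by (intro sum.mono_neutral_left) (auto simp: a_def)
    finally show ?thesis .
  qed
  then have "p_s_factor l s m = (\<lambda>n. \<Sum>i\<le>n. a i * b (n - i))" by (simp add: fun_eq_iff)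
  with Cauchy show ?thesis by simp
qed

lemma p_s_nonneg:
  assumes "\<forall>j. 0 \<le> lam j" and "0 \<le> s" "s \<le> 1"
  shows "0 \<le> p_s lam s y z"
  unfolding p_s_eq_prod using assms by (intro prod_nonneg ballI p_s_factor_nonneg) auto

lemma p_s_probability:
  assumes lam: "\<forall>j. 0 \<le> lam j" and s: "0 \<le> s" "s \<le> 1"
  shows "integrable (count_space UNIV) (p_s lam s y)"
    and "(\<integral>z. p_s lam s y z \<partial>count_space UNIV) = 1"
proof -
  have factor_sums: "p_s_factor (lam j) s (y j) sums 1" for j
    using p_s_factor_sums lam s by blast
  have summable: "Infinite_Set_Sum.abs_summable_on (p_s_factor (lam j) s (y j)) UNIV" for j
    unfolding abs_summable_on_nat_iff'
    using sums_summable[OF factor_sums[of j]] p_s_factor_nonneg lam s by simp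
  have PiE_UNIV: "PiE (UNIV::'a set) (\<lambda>_. UNIV::nat set) = UNIV" by auto
  have p_s_fun: "(\<lambda>g. \<Prod>j\<in>UNIV. p_s_factor (lam j) s (y j) (g j)) = p_s lam s y"
    by (simp add: p_s_eq_prod fun_eq_iff)
  have "Infinite_Set_Sum.abs_summable_on (\<lambda>g. \<Prod>j\<in>UNIV. p_s_factor (lam j) s (y j) (g j))
      (PiE UNIV (\<lambda>_. UNIV))"
    by (rule abs_summable_on_prod_PiE) (use summable in auto)
  then show "integrable (count_space UNIV) (p_s lam s y)"
    unfolding PiE_UNIV p_s_fun abs_summable_on_def .
  have "infsetsum (\<lambda>g. \<Prod>j\<in>UNIV. p_s_factor (lam j) s (y j) (g j)) (PiE UNIV (\<lambda>_. UNIV))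
      = (\<Prod>j\<in>UNIV. infsetsum (p_s_factor (lam j) s (y j)) UNIV)"
    by (rule infsetsum_prod_PiE) (use summable in auto)
  also have "\<dots> = 1"
    using infsetsum_nat'[OF summable] sums_unique[OF factor_sums] by simp
  finally show "(\<integral>z. p_s lam s y z \<partial>count_space UNIV) = 1"
    unfolding PiE_UNIV p_s_fun infsetsum_def .
qed

lemma p_s_measurable: "(\<lambda>s. p_s lam s y z) \<in> borel_measurable borel"
  unfolding p_s_def by measurable

section \<open>The Gaussian measure\<close>

lemma std_normal_density_integral: "(\<integral>\<^sup>+x. ennreal (std_normal_density x) \<partial>lborel) = 1"
proof -
  interpret prob_space "density lborel (\<lambda>x. ennreal (normal_density 0 1 x))"
    by (rule prob_space_normal_density) simp
  show ?thesis
    using emeasure_space_1 by (simp add: emeasure_density)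
qed

lemma Basis_vec_axis: "(Basis :: (real^'n::finite) set) = range (\<lambda>i. axis i 1)"
  by (auto simp: Basis_vec_def)

lemma prob_space_std_gauss: "prob_space (std_gauss :: (real^'n::finite) measure)"
proof
  have prod_Basis: "(\<lambda>w::real^'n. ennreal (\<Prod>i\<in>UNIV. std_normal_density (w $ i)))
     = (\<lambda>w. \<Prod>b\<in>Basis. ennreal (std_normal_density (w \<bullet> b)))"
  proof
    fix w :: "real^'n"
    have "(\<Prod>i\<in>UNIV. std_normal_density (w $ i)) = (\<Prod>b\<in>Basis. std_normal_density (w \<bullet> b))"
      unfolding Basis_vec_axis
      by (subst prod.reindex) (auto simp: inj_on_def axis_eq_axis inner_axis)
    then show "ennreal (\<Prod>i\<in>UNIV. std_normal_density (w $ i))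
        = (\<Prod>b\<in>Basis. ennreal (std_normal_density (w \<bullet> b)))"
      by (simp add: prod_ennreal)
  qed
  have "emeasure std_gauss (space (std_gauss :: (real^'n) measure))
      = (\<integral>\<^sup>+w. ennreal (\<Prod>i\<in>UNIV. std_normal_density (w $ i)) \<partial>(lborel :: (real^'n) measure))"
    unfolding std_gauss_def by (simp add: emeasure_density)
  also have "\<dots> = (\<Prod>b\<in>(Basis :: (real^'n) set). (\<integral>\<^sup>+x. ennreal (std_normal_density x) \<partial>lborel))"
    unfolding prod_Basis by (rule nn_integral_lborel_prod) auto
  also have "\<dots> = 1" by (simp add: std_normal_density_integral)
  finally show "emeasure std_gauss (space (std_gauss :: (real^'n) measure)) = 1" .
qed

lemma sets_gauss [simp, measurable_cong]: "sets (gauss S) = sets borel"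
  by (simp add: gauss_def)

lemma prob_space_gauss: "prob_space (gauss (S :: real^'n::finite^'n))"
  unfolding gauss_def
proof (rule prob_space.prob_space_distr[OF prob_space_std_gauss])
  show "(*v) (sqrt_mat S) \<in> std_gauss \<rightarrow>\<^sub>M borel"
    by (auto simp: std_gauss_def intro!: borel_measurable_continuous_onI linear_continuous_on)
qed

lemma borel_measurable_gauss_continuous_on:
  assumes "continuous_on UNIV f" shows "f \<in> borel_measurable (gauss S)"
  using borel_measurable_continuous_onI[OF assms] measurable_cong_sets[OF sets_gauss refl] by simp

section \<open>The averaging operators \<open>S\<^sub>s\<close> and \<open>T\<^sub>s\<close>\<close>

definition bcont_family :: "(real^'n::finite \<Rightarrow> 'z \<Rightarrow> real) \<Rightarrow> real \<Rightarrow> bool" where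
  "bcont_family g B \<longleftrightarrow> (\<forall>z. continuous_on UNIV (\<lambda>x. g x z)) \<and> (\<forall>x z. \<bar>g x z\<bar> \<le> B)"

definition pd_fam :: "'n::finite \<Rightarrow> (real^'n \<Rightarrow> 'z \<Rightarrow> real) \<Rightarrow> real^'n \<Rightarrow> 'z \<Rightarrow> real" where
  "pd_fam j g x z = pd j (\<lambda>x. g x z) x"

lemma bcont_familyD:
  assumes "bcont_family g B"
  shows "continuous_on UNIV (\<lambda>x. g x z)" and "\<bar>g x z\<bar> \<le> B" and "0 \<le> B"
  using assms unfolding bcont_family_def by (auto intro: order_trans[OF abs_ge_zero])

lemma borel_measurable_S_op_integrand:
  assumes "bcont_family g B"
  shows "(\<lambda>u. g (a *\<^sub>R x + b *\<^sub>R u) z) \<in> borel_measurable (gauss S)"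
  by (rule borel_measurable_gauss_continuous_on, rule continuous_on_compose2[OF bcont_familyD(1)[OF assms]])
     (auto intro!: continuous_intros)

lemma integrable_S_op_integrand:
  assumes "bcont_family g B"
  shows "integrable (gauss S) (\<lambda>u. g (a *\<^sub>R x + b *\<^sub>R u) z)"
proof -
  interpret prob_space "gauss S" by (rule prob_space_gauss)
  show ?thesis
    by (rule integrable_const_bound[where B=B])
       (use bcont_familyD(2)[OF assms] borel_measurable_S_op_integrand[OF assms] in auto)
qed

lemma abs_S_op_le:
  assumes "bcont_family g B"
  shows "\<bar>S_op S s g x z\<bar> \<le> B"
proof -
  interpret prob_space "gauss S" by (rule prob_space_gauss)
  have "\<bar>S_op S s g x z\<bar> \<le> (\<integral>u. \<bar>g (sqrt (1 - s) *\<^sub>R x + sqrt s *\<^sub>R u) z\<bar> \<partial>gauss S)"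
    unfolding S_op_def by (rule integral_abs_bound)
  also have "\<dots> \<le> B"
    by (rule integral_le_const)
       (use integrable_S_op_integrand[OF assms] bcont_familyD(2)[OF assms] in auto)
  finally show ?thesis .
qed

lemma S_op_measurable:
  assumes "bcont_family g B"
  shows "(\<lambda>s. S_op S s g x z) \<in> borel_measurable borel"
proof -
  interpret prob_space "gauss S" by (rule prob_space_gauss)
  have "continuous_on UNIV (\<lambda>(s, u). g (sqrt (1 - s) *\<^sub>R x + sqrt s *\<^sub>R u) z)"
    unfolding case_prod_beta
    by (rule continuous_on_compose2[OF bcont_familyD(1)[OF assms]]) (auto intro!: continuous_intros)
  then have "(\<lambda>(s, u). g (sqrt (1 - s) *\<^sub>R x + sqrt s *\<^sub>R u) z) \<in> borel_measurable borel"
    by (rule borel_measurable_continuous_onI)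
  then have "(\<lambda>(s, u). g (sqrt (1 - s) *\<^sub>R x + sqrt s *\<^sub>R u) z)
      \<in> borel_measurable (borel \<Otimes>\<^sub>M gauss S)"
    by (simp add: borel_prod[symmetric] cong: measurable_cong_sets)
  then show ?thesis unfolding S_op_def by (rule borel_measurable_lebesgue_integral)
qed

lemma S_op_lipschitz:
  assumes g: "bcont_family g B" and s: "0 \<le> s" "s \<le> 1"
    and L: "\<And>x x' z. \<bar>g x z - g x' z\<bar> \<le> L * dist x x'"
  shows "\<bar>S_op S s g x z - S_op S s g x' z\<bar> \<le> sqrt (1 - s) * L * dist x x'"
proof -
  interpret prob_space "gauss S" by (rule prob_space_gauss)
  let ?a = "sqrt (1 - s)" and ?b = "sqrt s"
  note i = integrable_S_op_integrand[OF g, of S ?a _ ?b z]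
  have "S_op S s g x z - S_op S s g x' z
      = (\<integral>u. g (?a *\<^sub>R x + ?b *\<^sub>R u) z - g (?a *\<^sub>R x' + ?b *\<^sub>R u) z \<partial>gauss S)"
    unfolding S_op_def using i by simp
  also have "\<bar>\<dots>\<bar> \<le> (\<integral>u. \<bar>g (?a *\<^sub>R x + ?b *\<^sub>R u) z - g (?a *\<^sub>R x' + ?b *\<^sub>R u) z\<bar> \<partial>gauss S)"
    by (rule integral_abs_bound)
  also have "\<dots> \<le> ?a * L * dist x x'"
  proof (rule integral_le_const)
    have "dist (?a *\<^sub>R x + ?b *\<^sub>R u) (?a *\<^sub>R x' + ?b *\<^sub>R u) = ?a * dist x x'" for u
      using s by (simp add: dist_norm scaleR_diff_right[symmetric])
    then show "AE u in gauss S. \<bar>g (?a *\<^sub>R x + ?b *\<^sub>R u) z - g (?a *\<^sub>R x' + ?b *\<^sub>R u) z\<bar>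
        \<le> ?a * L * dist x x'"
      using L[of "?a *\<^sub>R x + ?b *\<^sub>R u" z "?a *\<^sub>R x' + ?b *\<^sub>R u" for u] by (auto simp: mult_ac)
  qed (use i in auto)
  finally show ?thesis .
qed

lemma S_op_pd_derivative:
  assumes g: "bcont_family g B" and s: "0 \<le> s" "s \<le> 1"
    and has_pd: "\<And>z. has_pd j (\<lambda>x. g x z)" and g': "bcont_family (pd_fam j g) B'"
  shows "((\<lambda>t. S_op S s g (x + t *\<^sub>R axis j 1) z) has_real_derivative
      sqrt (1 - s) * S_op S s (pd_fam j g) x z) (at 0)"
proof -
  interpret prob_space "gauss S" by (rule prob_space_gauss)
  let ?a = "sqrt (1 - s)" and ?b = "sqrt s"
  have a: "0 \<le> ?a" "?a \<le> 1" using s by auto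
  have "((\<lambda>t. \<integral>u. g (?a *\<^sub>R (x + t *\<^sub>R axis j 1) + ?b *\<^sub>R u) z \<partial>gauss S) has_real_derivative
      (\<integral>u. ?a * pd_fam j g (?a *\<^sub>R x + ?b *\<^sub>R u) z \<partial>gauss S)) (at 0)"
  proof (rule has_real_derivative_integral_along_line[where B="\<lambda>_. B'"])
    fix u x
    have "((\<lambda>t. g ((?a *\<^sub>R x + ?b *\<^sub>R u) + (?a * t) *\<^sub>R axis j 1) z) has_real_derivative
        ?a * pd j (\<lambda>x. g x z) ((?a *\<^sub>R x + ?b *\<^sub>R u) + (?a * 0) *\<^sub>R axis j 1)) (at 0)"
      by (rule pd_has_real_derivative_scaled[OF has_pd])
    then show "((\<lambda>t. g (?a *\<^sub>R (x + t *\<^sub>R axis j 1) + ?b *\<^sub>R u) z) has_real_derivative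
        ?a * pd_fam j g (?a *\<^sub>R x + ?b *\<^sub>R u) z) (at 0)"
      by (simp add: pd_fam_def algebra_simps)
    have "\<bar>?a * pd_fam j g (?a *\<^sub>R x + ?b *\<^sub>R u) z\<bar> \<le> 1 * B'"
      unfolding abs_mult by (rule mult_mono) (use a bcont_familyD[OF g'] in auto)
    then show "\<bar>?a * pd_fam j g (?a *\<^sub>R x + ?b *\<^sub>R u) z\<bar> \<le> B'" by simp
  next
    fix x
    show "(\<lambda>u. g (?a *\<^sub>R x + ?b *\<^sub>R u) z) \<in> borel_measurable (gauss S)"
      by (rule borel_measurable_S_op_integrand[OF g])
    show "(\<lambda>u. ?a * pd_fam j g (?a *\<^sub>R x + ?b *\<^sub>R u) z) \<in> borel_measurable (gauss S)"
      using borel_measurable_S_op_integrand[OF g'] by measurable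
  qed (use integrable_S_op_integrand[OF g] in simp_all)
  then show ?thesis by (simp add: S_op_def)
qed

context
  fixes lam :: "'m::finite \<Rightarrow> real"
  assumes lam_nonneg: "\<forall>j. 0 \<le> lam j"
begin

lemma integrable_T_op_summands:
  fixes g :: "real^'n::finite \<Rightarrow> ('m \<Rightarrow> nat) \<Rightarrow> real"
  assumes g: "bcont_family g B" and s: "0 \<le> s" "s \<le> 1"
  shows "integrable (count_space UNIV) (\<lambda>z. S_op S s g x z * p_s lam s y z)"
proof (rule Bochner_Integration.integrable_bound[of _ "\<lambda>z. B * p_s lam s y z"])
  show "integrable (count_space UNIV) (\<lambda>z. B * p_s lam s y z)"
    using p_s_probability(1)[OF lam_nonneg s] by (rule integrable_mult_right)
  show "AE z in count_space UNIV. norm (S_op S s g x z * p_s lam s y z) \<le> norm (B * p_s lam s y z)"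
    using abs_S_op_le[OF g] p_s_nonneg[OF lam_nonneg s] bcont_familyD(3)[OF g]
    by (auto simp: abs_mult intro!: mult_right_mono)
qed simp

lemma T_op_eq_integral:
  fixes g :: "real^'n::finite \<Rightarrow> ('m \<Rightarrow> nat) \<Rightarrow> real"
  assumes "bcont_family g B" and "0 \<le> s" "s \<le> 1"
  shows "T_op S lam s g x y = (\<integral>z. S_op S s g x z * p_s lam s y z \<partial>count_space UNIV)"
  unfolding T_op_def
  using infsetsum_infsum[of "\<lambda>z. S_op S s g x z * p_s lam s y z" UNIV]
    integrable_T_op_summands[OF assms]
  by (simp add: abs_summable_on_def infsetsum_def)

lemma abs_T_op_le:
  fixes g :: "real^'n::finite \<Rightarrow> ('m \<Rightarrow> nat) \<Rightarrow> real"
  assumes g: "bcont_family g B" and s: "0 \<le> s" "s \<le> 1"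
  shows "\<bar>T_op S lam s g x y\<bar> \<le> B"
proof -
  note P = p_s_probability[OF lam_nonneg s, of y] p_s_nonneg[OF lam_nonneg s, of y]
  have "\<bar>T_op S lam s g x y\<bar> \<le> (\<integral>z. \<bar>S_op S s g x z * p_s lam s y z\<bar> \<partial>count_space UNIV)"
    unfolding T_op_eq_integral[OF g s] by (rule integral_abs_bound)
  also have "\<dots> \<le> (\<integral>z. B * p_s lam s y z \<partial>count_space UNIV)"
  proof (rule integral_mono)
    show "integrable (count_space UNIV) (\<lambda>z. \<bar>S_op S s g x z * p_s lam s y z\<bar>)"
      using integrable_T_op_summands[OF g s] by (rule integrable_abs)
    show "integrable (count_space UNIV) (\<lambda>z. B * p_s lam s y z)"
      using P(1) by (rule integrable_mult_right)
    show "\<bar>S_op S s g x z * p_s lam s y z\<bar> \<le> B * p_s lam s y z" for z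
      using abs_S_op_le[OF g, of S s x z] P(3)[of z] by (simp add: abs_mult mult_right_mono)
  qed
  also have "\<dots> = B" using P(2) by simp
  finally show ?thesis .
qed

lemma T_op_measurable:
  fixes g :: "real^'n::finite \<Rightarrow> ('m \<Rightarrow> nat) \<Rightarrow> real"
  assumes g: "bcont_family g B"
  shows "(\<lambda>s. indicator {0..1} s * T_op S lam s g x y) \<in> borel_measurable borel"
proof -
  interpret sigma_finite_measure "count_space (UNIV :: ('m \<Rightarrow> nat) set)"
    by (rule sigma_finite_measure_count_space_countable) simp
  have eq: "(\<lambda>s. indicator {0..1} s * T_op S lam s g x y)
      = (\<lambda>s. indicator {0..1} s * (\<integral>z. S_op S s g x z * p_s lam s y z \<partial>count_space UNIV))"
    using T_op_eq_integral[OF g] by (auto simp: fun_eq_iff indicator_def)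
  have summand: "(\<lambda>w. S_op S (fst w) g x z * p_s lam (fst w) y z)
      \<in> borel_measurable (borel \<Otimes>\<^sub>M count_space UNIV)" for z
  proof -
    note [measurable] = S_op_measurable[OF g, of S x z] p_s_measurable[of lam y z]
    show ?thesis by measurable
  qed
  have "(\<lambda>w. (\<lambda>z w. S_op S (fst w) g x z * p_s lam (fst w) y z) (snd w) w)
      \<in> borel_measurable (borel \<Otimes>\<^sub>M count_space UNIV)"
    by (rule measurable_compose_countable'[OF summand measurable_snd]) auto
  then have "(\<lambda>s. \<integral>z. S_op S s g x z * p_s lam s y z \<partial>count_space UNIV) \<in> borel_measurable borel"
    by (intro borel_measurable_lebesgue_integral) (simp add: case_prod_beta)
  then show ?thesis unfolding eq by measurable
qed

lemma T_op_pd_derivative: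
  fixes g :: "real^'n::finite \<Rightarrow> ('m \<Rightarrow> nat) \<Rightarrow> real"
  assumes g: "bcont_family g B" and s: "0 \<le> s" "s \<le> 1"
    and has_pd: "\<And>z. has_pd j (\<lambda>x. g x z)" and g': "bcont_family (pd_fam j g) B'"
  shows "((\<lambda>t. T_op S lam s g (x + t *\<^sub>R axis j 1) y) has_real_derivative
      sqrt (1 - s) * T_op S lam s (pd_fam j g) x y) (at 0)"
proof -
  note P = p_s_probability[OF lam_nonneg s, of y] p_s_nonneg[OF lam_nonneg s, of y]
  let ?a = "sqrt (1 - s)"
  have "((\<lambda>t. \<integral>z. S_op S s g (x + t *\<^sub>R axis j 1) z * p_s lam s y z \<partial>count_space UNIV)
      has_real_derivative
      (\<integral>z. ?a * S_op S s (pd_fam j g) x z * p_s lam s y z \<partial>count_space UNIV)) (at 0)"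
  proof (rule has_real_derivative_integral_along_line[where B="\<lambda>z. B' * p_s lam s y z"])
    fix z x
    show "((\<lambda>t. S_op S s g (x + t *\<^sub>R axis j 1) z * p_s lam s y z) has_real_derivative
        ?a * S_op S s (pd_fam j g) x z * p_s lam s y z) (at 0)"
      by (rule DERIV_cmult_right[OF S_op_pd_derivative[OF g s has_pd g']])
    have "\<bar>?a * S_op S s (pd_fam j g) x z\<bar> \<le> 1 * B'"
      unfolding abs_mult
      by (rule mult_mono) (use s abs_S_op_le[OF g'] bcont_familyD(3)[OF g'] in auto)
    then show "\<bar>?a * S_op S s (pd_fam j g) x z * p_s lam s y z\<bar> \<le> B' * p_s lam s y z"
      using P(3) by (simp add: abs_mult mult_right_mono)
  next
    show "integrable (count_space UNIV) (\<lambda>z. B' * p_s lam s y z)"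
      using P(1) by (rule integrable_mult_right)
  qed (use integrable_T_op_summands[OF g s] in simp_all)
  then show ?thesis
    by (simp add: T_op_eq_integral[OF g s] T_op_eq_integral[OF g' s] mult.assoc)
qed

lemma continuous_on_T_op:
  fixes g :: "real^'n::finite \<Rightarrow> ('m \<Rightarrow> nat) \<Rightarrow> real"
  assumes g: "bcont_family g B" and s: "0 \<le> s" "s \<le> 1"
  shows "continuous_on UNIV (\<lambda>x. T_op S lam s g x y)"
proof -
  interpret prob_space "gauss S" by (rule prob_space_gauss)
  note P = p_s_probability[OF lam_nonneg s, of y] p_s_nonneg[OF lam_nonneg s, of y]
  have S_cont: "continuous_on UNIV (\<lambda>x. S_op S s g x z)" for z
    unfolding S_op_def
  proof (rule continuous_on_parametric_integral[where B="\<lambda>_. B"])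
    show "continuous_on UNIV (\<lambda>x. g (sqrt (1 - s) *\<^sub>R x + sqrt s *\<^sub>R u) z)" for u
      by (rule continuous_on_compose2[OF bcont_familyD(1)[OF g]]) (auto intro!: continuous_intros)
  qed (use borel_measurable_S_op_integrand[OF g] bcont_familyD(2)[OF g] in auto)
  have "continuous_on UNIV (\<lambda>x. \<integral>z. S_op S s g x z * p_s lam s y z \<partial>count_space UNIV)"
  proof (rule continuous_on_parametric_integral[where B="\<lambda>z. B * p_s lam s y z"])
    show "integrable (count_space UNIV) (\<lambda>z. B * p_s lam s y z)"
      using P(1) by (rule integrable_mult_right)
    show "\<bar>S_op S s g x z * p_s lam s y z\<bar> \<le> B * p_s lam s y z" for x z
      using P(3) abs_S_op_le[OF g] by (simp add: abs_mult mult_right_mono)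
  qed (auto intro!: continuous_intros S_cont)
  then show ?thesis unfolding T_op_eq_integral[OF g s] .
qed

lemma T_op_lipschitz:
  fixes g :: "real^'n::finite \<Rightarrow> ('m \<Rightarrow> nat) \<Rightarrow> real"
  assumes g: "bcont_family g B" and s: "0 \<le> s" "s \<le> 1"
    and L: "\<And>x x' z. \<bar>g x z - g x' z\<bar> \<le> L * dist x x'"
  shows "\<bar>T_op S lam s g x y - T_op S lam s g x' y\<bar> \<le> sqrt (1 - s) * L * dist x x'"
proof -
  note P = p_s_probability[OF lam_nonneg s, of y] p_s_nonneg[OF lam_nonneg s, of y]
  let ?a = "sqrt (1 - s)"
  note S_lip = S_op_lipschitz[OF g s L]
  note i = integrable_T_op_summands[OF g s]
  have "T_op S lam s g x y - T_op S lam s g x' y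
      = (\<integral>z. (S_op S s g x z - S_op S s g x' z) * p_s lam s y z \<partial>count_space UNIV)"
    using T_op_eq_integral[OF g s] i by (simp add: left_diff_distrib)
  also have "\<bar>\<dots>\<bar> \<le> (\<integral>z. \<bar>(S_op S s g x z - S_op S s g x' z) * p_s lam s y z\<bar> \<partial>count_space UNIV)"
    by (rule integral_abs_bound)
  also have "\<dots> \<le> (\<integral>z. (?a * L * dist x x') * p_s lam s y z \<partial>count_space UNIV)"
  proof (rule integral_mono)
    show "integrable (count_space UNIV) (\<lambda>z. \<bar>(S_op S s g x z - S_op S s g x' z) * p_s lam s y z\<bar>)"
      using i by (auto simp: left_diff_distrib)
    show "integrable (count_space UNIV) (\<lambda>z. (?a * L * dist x x') * p_s lam s y z)"
      using P(1) by (rule integrable_mult_right)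
    show "\<bar>(S_op S s g x z - S_op S s g x' z) * p_s lam s y z\<bar> \<le> (?a * L * dist x x') * p_s lam s y z"
      for z
      using S_lip[where S=S and x=x and x'=x' and z=z] P(3) by (simp add: abs_mult mult_right_mono)
  qed
  also have "\<dots> = ?a * L * dist x x'" using P(2) by simp
  finally show ?thesis .
qed

lemma T_op_time_integrand_measurable:
  fixes g :: "real^'n::finite \<Rightarrow> ('m \<Rightarrow> nat) \<Rightarrow> real" and v c :: "real \<Rightarrow> real"
  assumes g: "bcont_family g B" and v: "v \<in> borel_measurable borel"
    and c: "(\<lambda>s. indicator {0..1} s * c s) \<in> borel_measurable borel"
  shows "set_borel_measurable lborel {0..1} (\<lambda>s. v s * (T_op S lam s g x y - c s))"
proof -
  note [measurable] = T_op_measurable[OF g, of S x y] v c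
  have "(\<lambda>s. indicator {0..1} s *\<^sub>R (v s * (T_op S lam s g x y - c s)))
      = (\<lambda>s. v s * (indicator {0..1} s * T_op S lam s g x y - indicator {0..1} s * c s))"
    by (auto simp: fun_eq_iff split: split_indicator)
  then show ?thesis unfolding set_borel_measurable_def by simp
qed

lemma time_integral_T_op:
  fixes g :: "real^'n::finite \<Rightarrow> ('m \<Rightarrow> nat) \<Rightarrow> real" and v :: "real \<Rightarrow> real"
  assumes g: "bcont_family g B" and v_meas: "v \<in> borel_measurable borel"
    and v_nonneg: "\<And>s. 0 \<le> s \<Longrightarrow> s \<le> 1 \<Longrightarrow> 0 \<le> v s"
    and v_int: "set_integrable lborel {0..1} v"
  shows "set_integrable lborel {0..1} (\<lambda>s. v s * T_op S lam s g x y)"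
    and "continuous_on UNIV (\<lambda>x. LBINT s:{0..1}. v s * T_op S lam s g x y)"
    and "\<bar>LBINT s:{0..1}. v s * T_op S lam s g x y\<bar> \<le> B * (LBINT s:{0..1}. v s)"
proof -
  have meas: "set_borel_measurable lborel {0..1} (\<lambda>s. v s * T_op S lam s g x y)" for x
    using T_op_time_integrand_measurable[OF g v_meas, of "\<lambda>_. 0"] by simp
  have bound: "\<bar>v s * T_op S lam s g x y\<bar> \<le> v s * B" if "s \<in> {0..1}" for s x
    using that v_nonneg abs_T_op_le[OF g] by (simp add: abs_mult mult_left_mono)
  have w_int: "set_integrable lborel {0..1} (\<lambda>s. v s * B)"
    using v_int by simp
  note dominated = set_integral_dominated[OF meas w_int bound]
  show "set_integrable lborel {0..1} (\<lambda>s. v s * T_op S lam s g x y)"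
    by (rule dominated(1))
  show "\<bar>LBINT s:{0..1}. v s * T_op S lam s g x y\<bar> \<le> B * (LBINT s:{0..1}. v s)"
    using dominated(2) by (simp add: mult.commute)
  show "continuous_on UNIV (\<lambda>x. LBINT s:{0..1}. v s * T_op S lam s g x y)"
    unfolding set_lebesgue_integral_def
  proof (rule continuous_on_parametric_integral[OF _ meas[unfolded set_borel_measurable_def]])
    show "integrable lborel (\<lambda>s. indicator {0..1} s *\<^sub>R (v s * B))"
      using w_int unfolding set_integrable_def .
    show "continuous_on UNIV (\<lambda>x. indicator {0..1} s *\<^sub>R (v s * T_op S lam s g x y))" for s :: real
      by (cases "s \<in> {0..1}") (auto intro!: continuous_intros continuous_on_T_op[OF g])
    show "\<bar>indicator {0..1} s *\<^sub>R (v s * T_op S lam s g x y)\<bar> \<le> indicator {0..1} s *\<^sub>R (v s * B)"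
      for s x
      using bound[of s x] by (simp split: split_indicator)
  qed
qed

lemma time_integral_T_op_derivative:
  fixes g :: "real^'n::finite \<Rightarrow> ('m \<Rightarrow> nat) \<Rightarrow> real" and v c :: "real \<Rightarrow> real"
  assumes g: "bcont_family g B" and has_pd: "\<And>z. has_pd j (\<lambda>x. g x z)"
    and g': "bcont_family (pd_fam j g) B'"
    and v_meas: "v \<in> borel_measurable borel" and c_meas: "c \<in> borel_measurable borel"
    and v_nonneg: "\<And>s. 0 \<le> s \<Longrightarrow> s \<le> 1 \<Longrightarrow> 0 \<le> v s * sqrt (1 - s)"
    and v_int: "set_integrable lborel {0..1} (\<lambda>s. v s * sqrt (1 - s))"
    and integrable: "\<And>x. set_integrable lborel {0..1} (\<lambda>s. v s * (T_op S lam s g x y - c s))"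
  shows "((\<lambda>t. LBINT s:{0..1}. v s * (T_op S lam s g (x + t *\<^sub>R axis j 1) y - c s))
      has_real_derivative (LBINT s:{0..1}. v s * sqrt (1 - s) * T_op S lam s (pd_fam j g) x y)) (at 0)"
  unfolding set_lebesgue_integral_def
proof (rule has_real_derivative_integral_along_line[where B="\<lambda>s. indicator {0..1} s *\<^sub>R (v s * sqrt (1 - s)) * B'"])
  fix s :: real and x
  show "((\<lambda>t. indicator {0..1} s *\<^sub>R (v s * (T_op S lam s g (x + t *\<^sub>R axis j 1) y - c s)))
      has_real_derivative indicator {0..1} s *\<^sub>R (v s * sqrt (1 - s) * T_op S lam s (pd_fam j g) x y))
      (at 0)"
  proof (cases "s \<in> {0..1}")
    case True
    then have s: "0 \<le> s" "s \<le> 1" by auto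
    have "((\<lambda>t. v s * (T_op S lam s g (x + t *\<^sub>R axis j 1) y - c s)) has_real_derivative
        v s * (sqrt (1 - s) * T_op S lam s (pd_fam j g) x y - 0)) (at 0)"
      by (intro DERIV_cmult DERIV_diff T_op_pd_derivative[OF g s has_pd g'] DERIV_const)
    then show ?thesis using True by (simp add: mult.assoc)
  qed simp
  show "\<bar>indicator {0..1} s *\<^sub>R (v s * sqrt (1 - s) * T_op S lam s (pd_fam j g) x y)\<bar>
      \<le> indicator {0..1} s *\<^sub>R (v s * sqrt (1 - s)) * B'"
  proof (cases "s \<in> {0..1}")
    case True
    then have s: "0 \<le> s" "s \<le> 1" by auto
    have "\<bar>v s * sqrt (1 - s) * T_op S lam s (pd_fam j g) x y\<bar>
        = (v s * sqrt (1 - s)) * \<bar>T_op S lam s (pd_fam j g) x y\<bar>"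
      by (simp only: abs_mult[of "v s * sqrt (1 - s)"] abs_of_nonneg[OF v_nonneg[OF s]])
    also have "\<dots> \<le> (v s * sqrt (1 - s)) * B'"
      by (rule mult_left_mono[OF abs_T_op_le[OF g' s] v_nonneg[OF s]])
    finally show ?thesis using True by simp
  qed simp
next
  fix x
  show "(\<lambda>s. indicator {0..1} s *\<^sub>R (v s * (T_op S lam s g x y - c s))) \<in> borel_measurable lborel"
    using T_op_time_integrand_measurable[OF g v_meas, of c] c_meas
    unfolding set_borel_measurable_def by measurable
  show "(\<lambda>s. indicator {0..1} s *\<^sub>R (v s * sqrt (1 - s) * T_op S lam s (pd_fam j g) x y))
      \<in> borel_measurable lborel"
    using T_op_time_integrand_measurable[OF g', of "\<lambda>s. v s * sqrt (1 - s)" "\<lambda>_. 0"] v_meas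
    unfolding set_borel_measurable_def by simp
  show "integrable lborel (\<lambda>s. indicator {0..1} s *\<^sub>R (v s * (T_op S lam s g x y - c s)))"
    using integrable[of x] unfolding set_integrable_def .
next
  show "integrable lborel (\<lambda>s. indicator {0..1} s *\<^sub>R (v s * sqrt (1 - s)) * B')"
    using v_int unfolding set_integrable_def by (rule integrable_mult_left)
qed

text \<open>The singular weight \<open>1 / (2 (1 - s))\<close> of \<open>f\<^sub>h\<close> is tamed in differences
  \<open>T\<^sub>s g(x) - T\<^sub>s g(x')\<close>, which carry a factor \<open>\<surd>(1 - s)\<close>.\<close>
lemma time_integral_T_op_difference:
  fixes g :: "real^'n::finite \<Rightarrow> ('m \<Rightarrow> nat) \<Rightarrow> real"
  assumes g: "bcont_family g B" and L: "\<And>x x' z. \<bar>g x z - g x' z\<bar> \<le> L * dist x x'"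
  shows "set_integrable lborel {0..1}
      (\<lambda>s. 1 / (2 * (1 - s)) * (T_op S lam s g x y - T_op S lam s g x' y))"
    and "\<bar>LBINT s:{0..1}. 1 / (2 * (1 - s)) * (T_op S lam s g x y - T_op S lam s g x' y)\<bar>
      \<le> L * dist x x'"
proof -
  let ?w = "\<lambda>s. sqrt (1 - s) ^ 1 / (2 * (1 - s)) * (L * dist x x')"
  have meas: "set_borel_measurable lborel {0..1}
      (\<lambda>s. 1 / (2 * (1 - s)) * (T_op S lam s g x y - T_op S lam s g x' y))"
    by (rule T_op_time_integrand_measurable[OF g _ T_op_measurable[OF g]]) measurable
  have w_int: "set_integrable lborel {0..1} ?w"
    by (rule set_integrable_mult_left, rule weight_integral(1)) simp
  have bound: "\<bar>1 / (2 * (1 - s)) * (T_op S lam s g x y - T_op S lam s g x' y)\<bar> \<le> ?w s"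
    if "s \<in> {0..1}" for s
  proof -
    have s: "0 \<le> s" "s \<le> 1" using that by auto
    have "\<bar>1 / (2 * (1 - s)) * (T_op S lam s g x y - T_op S lam s g x' y)\<bar>
        = 1 / (2 * (1 - s)) * \<bar>T_op S lam s g x y - T_op S lam s g x' y\<bar>"
      using s by (simp add: abs_mult)
    also have "\<dots> \<le> 1 / (2 * (1 - s)) * (sqrt (1 - s) * L * dist x x')"
      by (rule mult_left_mono[OF T_op_lipschitz[OF g s L]]) (use s in simp)
    finally show ?thesis by simp
  qed
  note dominated = set_integral_dominated[OF meas w_int bound]
  show "set_integrable lborel {0..1}
      (\<lambda>s. 1 / (2 * (1 - s)) * (T_op S lam s g x y - T_op S lam s g x' y))"
    by (rule dominated(1))
  show "\<bar>LBINT s:{0..1}. 1 / (2 * (1 - s)) * (T_op S lam s g x y - T_op S lam s g x' y)\<bar>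
      \<le> L * dist x x'"
  proof -
    have "(LBINT s:{0..1}. ?w s) = (LBINT s:{0..1}. sqrt (1 - s) ^ 1 / (2 * (1 - s))) * (L * dist x x')"
      by (rule set_integral_mult_left)
    then show ?thesis using dominated(2) weight_integral(2)[of 1] by simp
  qed
qed

end

section \<open>Derivatives of \<open>f\<^sub>h\<close>\<close>

definition weighted_T :: "real^'n::finite^'n \<Rightarrow> ('m::finite \<Rightarrow> real) \<Rightarrow> nat \<Rightarrow>
    (real^'n \<Rightarrow> ('m \<Rightarrow> nat) \<Rightarrow> real) \<Rightarrow> real^'n \<Rightarrow> ('m \<Rightarrow> nat) \<Rightarrow> real" where
  "weighted_T S lam k g x y = (LBINT s:{0..1}. sqrt (1 - s) ^ k / (2 * (1 - s)) * T_op S lam s g x y)"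

lemma has_pd_uminus:
  assumes "has_pd j g"
  shows "has_pd j (\<lambda>x. - g x)" and "pd j (\<lambda>x. - g x) = (\<lambda>x. - pd j g x)"
proof -
  have "((\<lambda>t. - g (x + t *\<^sub>R axis j 1)) has_real_derivative - pd j g x) (at 0)" for x
    using DERIV_minus[OF pd_has_real_derivative[OF assms, of x 0]] by simp
  then show "has_pd j (\<lambda>x. - g x)" and "pd j (\<lambda>x. - g x) = (\<lambda>x. - pd j g x)"
    by (rule has_pdI)+
qed

lemma cls_H3_pd_fams:
  assumes "cls_H3 h"
  shows "bcont_family h 1" and "bcont_family (pd_fam j h) 1"
    and "bcont_family (pd_fam k (pd_fam j h)) 1"
    and "bcont_family (pd_fam l (pd_fam k (pd_fam j h))) 1"
    and "has_pd j (\<lambda>x. h x z)" and "has_pd k (\<lambda>x. pd_fam j h x z)"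
    and "has_pd l (\<lambda>x. pd_fam k (pd_fam j h) x z)"
    and "\<bar>h x z - h x' z\<bar> \<le> 1 * dist x x'"
proof -
  have C3: "C3 (\<lambda>x. h x z)" and bounded: "\<bar>h x z\<bar> \<le> 1"
    and "lip_const (\<lambda>x. h x z) \<le> ereal 1" "snorm2 (\<lambda>x. h x z) \<le> ereal 1"
    "snorm3 (\<lambda>x. h x z) \<le> ereal 1" for x z
    using assms by (auto simp: cls_H3_def cls_C3_def one_ereal_def[symmetric])
  then have lip: "\<And>x x'. \<bar>h x z - h x' z\<bar> \<le> 1 * dist x x'"
    and D2: "\<And>x j k. \<bar>pd k (pd j (\<lambda>x. h x z)) x\<bar> \<le> 1"
    and D3: "\<And>x j k l. \<bar>pd l (pd k (pd j (\<lambda>x. h x z))) x\<bar> \<le> 1" for z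
    unfolding lip_const_le_iff snorm2_le_iff snorm3_le_iff by blast+
  have D1: "\<bar>pd j (\<lambda>x. h x z) x\<bar> \<le> 1" for j z x
    by (rule abs_pd_le_lipschitz[OF _ lip]) (use C3 in \<open>simp add: C3_def\<close>)
  show "bcont_family h 1" "bcont_family (pd_fam j h) 1" "bcont_family (pd_fam k (pd_fam j h)) 1"
    "bcont_family (pd_fam l (pd_fam k (pd_fam j h))) 1"
    using C3 bounded D1 D2 D3 by (auto simp: bcont_family_def pd_fam_def C3_def)
  show "has_pd j (\<lambda>x. h x z)" "has_pd k (\<lambda>x. pd_fam j h x z)"
    "has_pd l (\<lambda>x. pd_fam k (pd_fam j h) x z)"
    using C3 by (simp_all add: pd_fam_def C3_def)
  show "\<bar>h x z - h x' z\<bar> \<le> 1 * dist x x'" by (rule lip)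
qed

lemma f_sol_constant:
  assumes "\<forall>y'. \<exists>c. \<forall>x. h x y' = c"
  shows "f_sol S lam h x y = f_sol S lam h x' y"
proof -
  obtain c where "\<And>x y'. h x y' = c y'" using assms by metis
  then show ?thesis by (simp add: f_sol_def T_op_def S_op_def)
qed

context
  fixes lam :: "'m::finite \<Rightarrow> real"
  assumes lam_nonneg: "\<forall>j. 0 \<le> lam j"
begin

lemma weighted_T_continuous_bounded:
  fixes g :: "real^'n::finite \<Rightarrow> ('m \<Rightarrow> nat) \<Rightarrow> real"
  assumes k: "0 < k" and g: "bcont_family g B"
  shows "continuous_on UNIV (\<lambda>x. weighted_T S lam k g x y)"
    and "\<bar>weighted_T S lam k g x y\<bar> \<le> B / k"
  using time_integral_T_op(2,3)[OF lam_nonneg g _ _ weight_integral(1)[OF k]] weight_integral(2)[OF k]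
  unfolding weighted_T_def by auto

lemma has_pd_weighted_T:
  fixes g :: "real^'n::finite \<Rightarrow> ('m \<Rightarrow> nat) \<Rightarrow> real"
  assumes k: "0 < k" and g: "bcont_family g B" and has_pd: "\<And>z. has_pd j (\<lambda>x. g x z)"
    and g': "bcont_family (pd_fam j g) B'"
  shows "has_pd j (\<lambda>x. weighted_T S lam k g x y)"
    and "pd j (\<lambda>x. weighted_T S lam k g x y) = (\<lambda>x. weighted_T S lam (Suc k) (pd_fam j g) x y)"
proof -
  let ?w = "\<lambda>k s. sqrt (1 - s) ^ k / (2 * (1 - s))"
  have w_meas: "?w k \<in> borel_measurable borel" by measurable
  have w_Suc: "?w k s * sqrt (1 - s) = ?w (Suc k) s" for s by simp
  have "((\<lambda>t. LBINT s:{0..1}. ?w k s * (T_op S lam s g (x + t *\<^sub>R axis j 1) y - 0)) has_real_derivative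
      (LBINT s:{0..1}. ?w k s * sqrt (1 - s) * T_op S lam s (pd_fam j g) x y)) (at 0)" for x
  proof (rule time_integral_T_op_derivative[OF lam_nonneg g has_pd g' w_meas])
    show "set_integrable lborel {0..1} (\<lambda>s. ?w k s * sqrt (1 - s))"
      unfolding w_Suc by (rule weight_integral(1)) simp
    show "set_integrable lborel {0..1} (\<lambda>s. ?w k s * (T_op S lam s g x y - 0))" for x
      using time_integral_T_op(1)[OF lam_nonneg g w_meas _ weight_integral(1)[OF k]] by simp
  qed auto
  then have "((\<lambda>t. weighted_T S lam k g (x + t *\<^sub>R axis j 1) y) has_real_derivative
      weighted_T S lam (Suc k) (pd_fam j g) x y) (at 0)" for x
    unfolding weighted_T_def w_Suc by simp
  then show "has_pd j (\<lambda>x. weighted_T S lam k g x y)"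
    and "pd j (\<lambda>x. weighted_T S lam k g x y) = (\<lambda>x. weighted_T S lam (Suc k) (pd_fam j g) x y)"
    by (rule has_pdI)+
qed

text \<open>If the integrand defining \<open>f\<^sub>h\<close> is not integrable, the Lebesgue integral
  is \<open>0\<close> by convention; by \<open>time_integral_T_op_difference\<close> this happens for all
  \<open>x\<close> or for none.\<close>
lemma f_sol_integrable_or_zero:
  fixes h :: "real^'n::finite \<Rightarrow> ('m \<Rightarrow> nat) \<Rightarrow> real"
  assumes h: "cls_H3 h"
  obtains (integrable) "\<And>x. set_integrable lborel {0..1}
      (\<lambda>s. 1 / (2 * (1 - s)) * (T_op S lam s h x y - Eh S lam h))"
    | (zero) "\<And>x. f_sol S lam h x y = 0"
proof -
  note difference = time_integral_T_op_difference(1)[OF lam_nonneg cls_H3_pd_fams(1,8)[OF h]]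
  let ?F = "\<lambda>x s. 1 / (2 * (1 - s)) * (T_op S lam s h x y - Eh S lam h)"
  have transfer: "set_integrable lborel {0..1} (?F x)" if "set_integrable lborel {0..1} (?F x')" for x x'
  proof -
    have "set_integrable lborel {0..1}
        (\<lambda>s. ?F x' s + 1 / (2 * (1 - s)) * (T_op S lam s h x y - T_op S lam s h x' y))"
      by (rule set_integral_add(1)[OF that difference])
    moreover have "(\<lambda>s. ?F x' s + 1 / (2 * (1 - s)) * (T_op S lam s h x y - T_op S lam s h x' y)) = ?F x"
      by (simp add: fun_eq_iff algebra_simps)
    ultimately show ?thesis by simp
  qed
  show thesis
  proof (cases "set_integrable lborel {0..1} (?F 0)")
    case True
    then show thesis using transfer integrable by blast
  next
    case False
    then have "\<not> set_integrable lborel {0..1} (?F x)" for x using transfer by blast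
    then have "f_sol S lam h x y = 0" for x
      unfolding f_sol_def set_lebesgue_integral_def set_integrable_def
      by (simp add: not_integrable_integral_eq)
    then show thesis by (rule zero)
  qed
qed

lemma f_sol_lipschitz:
  fixes h :: "real^'n::finite \<Rightarrow> ('m \<Rightarrow> nat) \<Rightarrow> real"
  assumes h: "cls_H3 h"
    and integrable: "\<And>x. set_integrable lborel {0..1}
      (\<lambda>s. 1 / (2 * (1 - s)) * (T_op S lam s h x y - Eh S lam h))"
  shows "\<bar>f_sol S lam h x y - f_sol S lam h x' y\<bar> \<le> dist x x'"
proof -
  have "f_sol S lam h x y - f_sol S lam h x' y
      = (LBINT s:{0..1}. 1 / (2 * (1 - s)) * (T_op S lam s h x' y - Eh S lam h))
        - (LBINT s:{0..1}. 1 / (2 * (1 - s)) * (T_op S lam s h x y - Eh S lam h))"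
    unfolding f_sol_def by simp
  also have "\<dots> = (LBINT s:{0..1}. 1 / (2 * (1 - s)) * (T_op S lam s h x' y - Eh S lam h)
      - 1 / (2 * (1 - s)) * (T_op S lam s h x y - Eh S lam h))"
    by (rule set_integral_diff(2)[OF integrable integrable, symmetric])
  also have "\<dots> = (LBINT s:{0..1}. 1 / (2 * (1 - s)) * (T_op S lam s h x' y - T_op S lam s h x y))"
    by (simp add: algebra_simps)
  finally show ?thesis
    using time_integral_T_op_difference(2)[OF lam_nonneg cls_H3_pd_fams(1,8)[OF h], of S x' y x]
    by (simp add: dist_commute)
qed

lemma has_pd_f_sol:
  fixes h :: "real^'n::finite \<Rightarrow> ('m \<Rightarrow> nat) \<Rightarrow> real"
  assumes h: "cls_H3 h"
    and integrable: "\<And>x. set_integrable lborel {0..1}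
      (\<lambda>s. 1 / (2 * (1 - s)) * (T_op S lam s h x y - Eh S lam h))"
  shows "has_pd j (\<lambda>x. f_sol S lam h x y)"
    and "pd j (\<lambda>x. f_sol S lam h x y) = (\<lambda>x. - weighted_T S lam 1 (pd_fam j h) x y)"
proof -
  note fam = cls_H3_pd_fams[OF h]
  have w_1: "1 / (2 * (1 - s)) * sqrt (1 - s) = sqrt (1 - s) ^ 1 / (2 * (1 - s))" for s :: real
    by simp
  have "((\<lambda>t. LBINT s:{0..1}. 1 / (2 * (1 - s)) * (T_op S lam s h (x + t *\<^sub>R axis j 1) y - Eh S lam h))
      has_real_derivative
      (LBINT s:{0..1}. 1 / (2 * (1 - s)) * sqrt (1 - s) * T_op S lam s (pd_fam j h) x y)) (at 0)" for x
  proof (rule time_integral_T_op_derivative[OF lam_nonneg fam(1,5,2) _ _ _ _ integrable])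
    show "set_integrable lborel {0..1} (\<lambda>s. 1 / (2 * (1 - s)) * sqrt (1 - s))"
      unfolding w_1 by (rule weight_integral(1)) simp
  qed auto
  then have "((\<lambda>t. f_sol S lam h (x + t *\<^sub>R axis j 1) y) has_real_derivative
      - weighted_T S lam 1 (pd_fam j h) x y) (at 0)" for x
    unfolding f_sol_def weighted_T_def w_1 by (rule DERIV_minus)
  then show "has_pd j (\<lambda>x. f_sol S lam h x y)"
    and "pd j (\<lambda>x. f_sol S lam h x y) = (\<lambda>x. - weighted_T S lam 1 (pd_fam j h) x y)"
    by (rule has_pdI)+
qed

lemma f_sol_regular:
  fixes h :: "real^'n::finite \<Rightarrow> ('m \<Rightarrow> nat) \<Rightarrow> real"
  assumes h: "cls_H3 h"
    and integrable: "\<And>x. set_integrable lborel {0..1}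
      (\<lambda>s. 1 / (2 * (1 - s)) * (T_op S lam s h x y - Eh S lam h))"
  shows "C3 (\<lambda>x. f_sol S lam h x y) \<and> lip_const (\<lambda>x. f_sol S lam h x y) \<le> 1
    \<and> snorm2 (\<lambda>x. f_sol S lam h x y) \<le> 1/2 \<and> snorm3 (\<lambda>x. f_sol S lam h x y) \<le> 1/3"
proof -
  let ?f = "\<lambda>x. f_sol S lam h x y"
  let ?W = "\<lambda>k g x. weighted_T S lam k g x y"
  note fam = cls_H3_pd_fams[OF h]
  note pd1 = has_pd_f_sol[OF h integrable]
  note pd_W1 = has_pd_weighted_T[where k=1, OF _ fam(2,6,3), simplified]
  note pd_W2 = has_pd_weighted_T[where k=2, OF _ fam(3,7,4), simplified]
  have pd2: "has_pd k (pd j ?f)" "pd k (pd j ?f) = (\<lambda>x. - ?W 2 (pd_fam k (pd_fam j h)) x)" for j k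
    unfolding pd1(2) using has_pd_uminus[OF pd_W1(1)] pd_W1(2) by (auto simp: numeral_2_eq_2)
  have pd3: "has_pd l (pd k (pd j ?f))"
    "pd l (pd k (pd j ?f)) = (\<lambda>x. - ?W 3 (pd_fam l (pd_fam k (pd_fam j h))) x)" for j k l
    unfolding pd2(2) using has_pd_uminus[OF pd_W2(1)] pd_W2(2) by (auto simp: numeral_3_eq_3)
  have lip: "\<bar>?f x - ?f x'\<bar> \<le> 1 * dist x x'" for x x'
    using f_sol_lipschitz[OF h integrable] by simp
  have "continuous_on UNIV ?f"
    by (rule lipschitz_on_continuous_on[of 1], rule lipschitz_onI) (use lip in \<open>auto simp: dist_real_def\<close>)
  moreover have "continuous_on UNIV (pd j ?f)" for j
    unfolding pd1(2) by (intro continuous_intros weighted_T_continuous_bounded(1)[OF _ fam(2)]) simp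
  moreover have "continuous_on UNIV (pd k (pd j ?f))" for j k
    unfolding pd2(2) by (intro continuous_intros weighted_T_continuous_bounded(1)[OF _ fam(3)]) simp
  moreover have "continuous_on UNIV (pd l (pd k (pd j ?f)))" for j k l
    unfolding pd3(2) by (intro continuous_intros weighted_T_continuous_bounded(1)[OF _ fam(4)]) simp
  ultimately have "C3 ?f"
    unfolding C3_def using pd1(1) pd2(1) pd3(1) by blast
  moreover have "lip_const ?f \<le> 1"
    using lip lip_const_le_iff[of ?f 1] by (simp add: one_ereal_def)
  moreover have "snorm2 ?f \<le> 1/2"
    unfolding one_div_numeral_ereal snorm2_le_iff pd2(2)
    using weighted_T_continuous_bounded(2)[where k=2, OF _ fam(3)] by simp
  moreover have "snorm3 ?f \<le> 1/3"
    unfolding one_div_numeral_ereal snorm3_le_iff pd3(2)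
    using weighted_T_continuous_bounded(2)[where k=3, OF _ fam(4)] by simp
  ultimately show ?thesis by blast
qed

end

theorem lemma2p5:
  fixes Sigma :: "real^'n::finite^'n" and lam :: "'m::finite \<Rightarrow> real"
    and h :: "real^'n \<Rightarrow> ('m \<Rightarrow> nat) \<Rightarrow> real" and y :: "'m \<Rightarrow> nat"
  assumes "psd Sigma" and "\<forall>j. 0 < lam j" and "cls_H3 h"
  shows "C3 (\<lambda>x. f_sol Sigma lam h x y)
      \<and> lip_const (\<lambda>x. f_sol Sigma lam h x y) \<le> 1
      \<and> snorm2 (\<lambda>x. f_sol Sigma lam h x y) \<le> 1/2
      \<and> snorm3 (\<lambda>x. f_sol Sigma lam h x y) \<le> 1/3
      \<and> ((\<forall>y'. \<exists>c. \<forall>x. h x y' = c) \<longrightarrow>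
           lip_const (\<lambda>x. f_sol Sigma lam h x y) = 0
         \<and> snorm2 (\<lambda>x. f_sol Sigma lam h x y) = 0
         \<and> snorm3 (\<lambda>x. f_sol Sigma lam h x y) = 0)"
proof -
  let ?f = "\<lambda>x. f_sol Sigma lam h x y"
  have lam: "\<forall>j. 0 \<le> lam j" using assms(2) by (simp add: less_imp_le)
  have "C3 ?f \<and> lip_const ?f \<le> 1 \<and> snorm2 ?f \<le> 1/2 \<and> snorm3 ?f \<le> 1/3"
  proof (cases rule: f_sol_integrable_or_zero[OF lam assms(3), of Sigma y, case_names integrable zero])
    case integrable
    then show ?thesis by (rule f_sol_regular[OF lam assms(3)])
  next
    case zero
    then have "?f = (\<lambda>x. 0)" by auto
    then show ?thesis
      unfolding one_div_numeral_ereal by (simp add: constant_fun_C3_seminorms)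
  qed
  moreover have "?f = (\<lambda>x. ?f 0)" if "\<forall>y'. \<exists>c. \<forall>x. h x y' = c"
    using f_sol_constant[OF that] by blast
  ultimately show ?thesis using constant_fun_C3_seminorms[of "?f 0"] by auto
qed

end
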